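(* Let $0<d_{\min}<d_{\max}$, $N\ge 3$, $T_{\rm s}>0$. For $R_1,\dots,R_N\in[d_{\min},d_{\max}]$ and $\theta_1,\dots,\theta_N\in[0,2\pi)$ with $\sum_{j<k}\sin^2(\theta_j-\theta_k)>0$, let $$S(R,\theta)=\frac{\sum_{k=1}^N R_k^{-2}}{T_{\rm s}\sum_{j<k} R_j^{-2}R_k^{-2}\sin^2(\theta_j-\theta_k)}.$$ Then $S(R,\theta)\ge \frac{4d_{\min}^2}{NT_{\rm s}}$ for all such $(R,\theta)$, and equality holds when $R_1=\dots=R_N=d_{\min}$ and $\theta_k=2\pi k/N$, $k=1,\dots,N$ (anchors at the vertices of a regular $N$-gon inscribed in the circle of radius $d_{\min}$). In particular, the minimum of $S$ over this set, and also the minimum of the GDOP $G(R,\theta)=\frac{NR^2}{T_{\rm s}\sum_{j<k}\sin^2(\theta_j-\theta_k)}$ over $R\in[d_{\min},d_{\max}]$ and such $\theta$, both equal $4d_{\min}^2/(NT_{\rm s})$.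
   Context: $S$ is the squared position error bound for anchors at polar positions $(R_k,\theta_k)$ relative to the target at the origin; $T_{\rm s}>0$ is a fixed constant. *)

theory Defs
  imports "HOL-Analysis.Analysis"
begin

definition sin2sum :: "nat \<Rightarrow> (nat \<Rightarrow> real) \<Rightarrow> real" where
  "sin2sum N th = (\<Sum>j\<in>{1..N}. \<Sum>k\<in>{j<..N}. (sin (th j - th k))^2)"

definition S_bound :: "real \<Rightarrow> nat \<Rightarrow> (nat \<Rightarrow> real) \<Rightarrow> (nat \<Rightarrow> real) \<Rightarrow> real" where
  "S_bound Ts N R th =
     (\<Sum>k\<in>{1..N}. 1 / (R k)^2) /
     (Ts * (\<Sum>j\<in>{1..N}. \<Sum>k\<in>{j<..N}. (1 / (R j)^2) * (1 / (R k)^2) * (sin (th j - th k))^2))"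

definition GDOP :: "real \<Rightarrow> nat \<Rightarrow> real \<Rightarrow> (nat \<Rightarrow> real) \<Rightarrow> real" where
  "GDOP Ts N R th = real N * R^2 / (Ts * sin2sum N th)"

definition admissible :: "real \<Rightarrow> real \<Rightarrow> nat \<Rightarrow> (nat \<Rightarrow> real) \<Rightarrow> (nat \<Rightarrow> real) \<Rightarrow> bool" where
  "admissible dmin dmax N R th \<longleftrightarrow>
     (\<forall>k\<in>{1..N}. dmin \<le> R k \<and> R k \<le> dmax \<and> 0 \<le> th k \<and> th k < 2 * pi) \<and>
     sin2sum N th > 0"

definition Min_on :: "real set \<Rightarrow> real \<Rightarrow> bool" where
  "Min_on A m \<longleftrightarrow> m \<in> A \<and> (\<forall>x\<in>A. m \<le> x)"

end

theory Submission
  imports Defs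
begin

text \<open>
  Write w k = 1 / R k^2 and z = \<Sum>k. w k e^(2 i th k). Expanding |z|^2 gives
  4 \<Sum>(j<k). w j w k sin^2 (th j - th k) = (\<Sum>k. w k)^2 - |z|^2 \<le> (\<Sum>k. w k)^2,
  so S \<ge> 4 / (Ts \<Sum>k. w k) \<ge> 4 dmin^2 / (N Ts). Equality needs all ranges equal to dmin
  and z = 0; for the regular N-gon z is a geometric sum with ratio e^(4 \<pi> i / N) over a full
  period, which vanishes because the ratio is not 1 when N \<ge> 3. The GDOP is S with all ranges
  equal.
\<close>

definition weighted_sin2sum :: "nat \<Rightarrow> (nat \<Rightarrow> real) \<Rightarrow> (nat \<Rightarrow> real) \<Rightarrow> real" where
  "weighted_sin2sum n w t = (\<Sum>j\<in>{1..n}. \<Sum>k\<in>{j<..n}. w j * w k * (sin (t j - t k))^2)"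

lemma sin2sum_eq_weighted: "sin2sum n t = weighted_sin2sum n (\<lambda>_. 1) t"
  by (simp add: sin2sum_def weighted_sin2sum_def)

lemma S_bound_eq_weighted:
  "S_bound Ts N R th =
     (\<Sum>k\<in>{1..N}. 1 / (R k)^2) / (Ts * weighted_sin2sum N (\<lambda>k. 1 / (R k)^2) th)"
  by (simp add: S_bound_def weighted_sin2sum_def)

lemma weighted_sin2sum_shift: "weighted_sin2sum n w (\<lambda>k. t k - c) = weighted_sin2sum n w t"
  by (simp add: weighted_sin2sum_def)

lemma S_bound_shift: "S_bound Ts N R (\<lambda>k. th k - c) = S_bound Ts N R th"
  by (simp only: S_bound_eq_weighted weighted_sin2sum_shift)

lemma weighted_sin2sum_const: "weighted_sin2sum n (\<lambda>_. c) t = c^2 * sin2sum n t"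
  by (simp add: weighted_sin2sum_def sin2sum_def sum_distrib_left power2_eq_square mult.assoc)

lemma weighted_sin2sum_ge:
  assumes "\<forall>k\<in>{1..n}. c \<le> w k" and "0 \<le> c"
  shows "c^2 * sin2sum n t \<le> weighted_sin2sum n w t"
  unfolding weighted_sin2sum_const[symmetric] weighted_sin2sum_def
proof (intro sum_mono mult_right_mono)
  fix j k assume "j \<in> {1..n}" "k \<in> {j<..n}"
  then have "c \<le> w j" "c \<le> w k" using assms(1) by auto
  with assms(2) show "c * c \<le> w j * w k" by (intro mult_mono) auto
qed simp

lemma two_sin_diff_squared:
  "2 * (sin (x - y))^2 = 1 - cos (2*x) * cos (2*y) - sin (2*x) * sin (2*y)" for x y :: real
proof -
  have "2 * (sin (x - y))^2 = 1 - cos (2*x - 2*y)"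
    using cos_double_sin[of "x - y"] by (simp add: right_diff_distrib)
  then show ?thesis by (simp add: cos_diff)
qed

lemma weighted_sin2sum_closed_form:
  "4 * weighted_sin2sum n w t =
     (\<Sum>k\<in>{1..n}. w k)^2 - (\<Sum>k\<in>{1..n}. w k * cos (2 * t k))^2 - (\<Sum>k\<in>{1..n}. w k * sin (2 * t k))^2"
proof (induction n)
  case 0
  then show ?case by (simp add: weighted_sin2sum_def)
next
  case (Suc n)
  define a c s where "a = w (Suc n)" and "c = cos (2 * t (Suc n))" and "s = sin (2 * t (Suc n))"
  define W C S where "W = (\<Sum>k\<in>{1..n}. w k)" and "C = (\<Sum>k\<in>{1..n}. w k * cos (2 * t k))"
    and "S = (\<Sum>k\<in>{1..n}. w k * sin (2 * t k))"
  have "weighted_sin2sum (Suc n) w t =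
      weighted_sin2sum n w t + (\<Sum>j\<in>{1..n}. w j * a * (sin (t j - t (Suc n)))^2)"
  proof -
    have "{j<..Suc n} = insert (Suc n) {j<..n}" if "j \<le> n" for j
      using that by auto
    then show ?thesis
      by (simp add: weighted_sin2sum_def a_def sum.distrib)
  qed
  also have "(\<Sum>j\<in>{1..n}. w j * a * (sin (t j - t (Suc n)))^2)
      = (\<Sum>j\<in>{1..n}. a / 2 * (w j - c * (w j * cos (2 * t j)) - s * (w j * sin (2 * t j))))"
  proof (intro sum.cong refl)
    fix j
    have "w j * a * (sin (t j - t (Suc n)))^2 = a / 2 * w j * (2 * (sin (t j - t (Suc n)))^2)"
      by simp
    then show "w j * a * (sin (t j - t (Suc n)))^2
        = a / 2 * (w j - c * (w j * cos (2 * t j)) - s * (w j * sin (2 * t j)))"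
      unfolding two_sin_diff_squared c_def s_def by (simp add: algebra_simps)
  qed
  also have "\<dots> = a / 2 * (W - c * C - s * S)"
    unfolding W_def C_def S_def sum_distrib_left[symmetric] sum_subtractf ..
  finally have step: "4 * weighted_sin2sum (Suc n) w t = 4 * weighted_sin2sum n w t + 2 * a * (W - c * C - s * S)"
    by simp
  have IH: "4 * weighted_sin2sum n w t = W^2 - C^2 - S^2"
    using Suc.IH by (simp add: W_def C_def S_def)
  have sums: "(\<Sum>k\<in>{1..Suc n}. w k) = W + a"
    "(\<Sum>k\<in>{1..Suc n}. w k * cos (2 * t k)) = C + a * c"
    "(\<Sum>k\<in>{1..Suc n}. w k * sin (2 * t k)) = S + a * s"
    by (simp_all add: W_def C_def S_def a_def c_def s_def)
  have "(W + a)^2 - (C + a * c)^2 - (S + a * s)^2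
      = W^2 - C^2 - S^2 + 2 * a * (W - c * C - s * S) + a^2 * (1 - (c^2 + s^2))"
    by (simp add: power2_eq_square algebra_simps)
  moreover have "c^2 + s^2 = 1" by (simp add: c_def s_def)
  ultimately show ?case unfolding step IH sums by simp
qed

lemma weighted_sin2sum_le: "4 * weighted_sin2sum n w t \<le> (\<Sum>k\<in>{1..n}. w k)^2"
  using weighted_sin2sum_closed_form[of n w t] by (smt (verit) zero_le_power2)

lemma sum_cis_regular_polygon:
  assumes "\<not> N dvd m"
  shows "(\<Sum>k\<in>{1..N}. cis (real m * (2 * pi * real k / real N))) = 0"
proof (cases "N = 0")
  case False
  define \<omega> where "\<omega> = cis (2 * pi * real m / real N)"
  have powers: "cis (real m * (2 * pi * real k / real N)) = \<omega> ^ k" for k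
    by (simp add: \<omega>_def Complex.DeMoivre ac_simps)
  have "\<omega> ^ N = 1"
    using False by (simp add: \<omega>_def Complex.DeMoivre)
  moreover have "\<omega> \<noteq> 1"
  proof
    assume "\<omega> = 1"
    then have "cos (2 * pi * real m / real N) = 1"
      by (simp add: \<omega>_def complex_eq_iff)
    then obtain n :: int where "2 * pi * real m / real N = of_int n * 2 * pi"
      by (auto simp: cos_one_2pi_int)
    then have "real_of_int (int m) = real_of_int (n * int N)"
      using False by (simp add: field_simps)
    then have "int N dvd int m"
      by (simp only: of_int_eq_iff) simp
    with assms show False by simp
  qed
  ultimately have "(\<Sum>k<N. \<omega> ^ k) = 0"
    by (simp add: geometric_sum)
  moreover have "(\<Sum>k\<in>{1..N}. \<omega> ^ k) = \<omega> * (\<Sum>k<N. \<omega> ^ k)"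
    by (simp add: sum.atLeast1_atMost_eq sum_distrib_left)
  ultimately show ?thesis
    by (simp only: powers) simp
qed simp

lemma sin2sum_regular_polygon:
  assumes "N \<ge> 3"
  shows "4 * sin2sum N (\<lambda>k. 2 * pi * real k / real N) = (real N)^2"
proof -
  have "\<not> N dvd 2" using assms by (auto dest: dvd_imp_le)
  then have "(\<Sum>k\<in>{1..N}. cis (real 2 * (2 * pi * real k / real N))) = 0"
    by (rule sum_cis_regular_polygon)
  then have "Re (\<Sum>k\<in>{1..N}. cis (2 * (2 * pi * real k / real N))) = 0"
    "Im (\<Sum>k\<in>{1..N}. cis (2 * (2 * pi * real k / real N))) = 0"
    by simp_all
  then have "(\<Sum>k\<in>{1..N}. cos (2 * (2 * pi * real k / real N))) = 0"
    "(\<Sum>k\<in>{1..N}. sin (2 * (2 * pi * real k / real N))) = 0"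
    by (simp_all add: Re_sum Im_sum)
  then show ?thesis
    using weighted_sin2sum_closed_form[of N "\<lambda>_. 1"] by (simp add: sin2sum_eq_weighted)
qed

lemma GDOP_eq_S_bound_const:
  assumes "r \<noteq> 0"
  shows "GDOP Ts N r th = S_bound Ts N (\<lambda>_. r) th"
  using assms
  by (simp add: GDOP_def S_bound_eq_weighted weighted_sin2sum_const field_simps power2_eq_square)

lemma S_bound_regular_polygon:
  assumes "N \<ge> 3" and "r \<noteq> 0"
  shows "S_bound Ts N (\<lambda>_. r) (\<lambda>k. 2 * pi * real k / real N) = 4 * r^2 / (real N * Ts)"
proof -
  have sin2: "sin2sum N (\<lambda>k. 2 * pi * real k / real N) = (real N)^2 / 4"
    using sin2sum_regular_polygon[OF assms(1)] by simp
  show ?thesis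
    unfolding GDOP_eq_S_bound_const[OF assms(2), symmetric] GDOP_def sin2
    using assms by (simp add: field_simps power2_eq_square)
qed

text \<open>
  The vertex \<open>2\<pi>N/N = 2\<pi>\<close> is not an admissible bearing, so the admissible witness is the
  same polygon rotated by \<open>-2\<pi>/N\<close>.
\<close>

lemma regular_polygon_admissible:
  assumes "N \<ge> 3" and "dmin \<le> dmax"
  shows "admissible dmin dmax N (\<lambda>_. dmin) (\<lambda>k. 2 * pi * real k / real N - 2 * pi / real N)"
proof -
  have N: "real N > 0" using assms by simp
  have "0 \<le> 2 * pi * real k / real N - 2 * pi / real N \<and> 2 * pi * real k / real N - 2 * pi / real N < 2 * pi"
    if "k \<in> {1..N}" for k
  proof -
    have "1 \<le> real k" "real k \<le> real N" using that by auto
    then have "2 * pi / real N \<le> 2 * pi * real k / real N" "2 * pi * real k / real N \<le> 2 * pi"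
      using N by (simp_all add: field_simps)
    moreover have "2 * pi / real N > 0" using N by simp
    ultimately show ?thesis by linarith
  qed
  moreover have "sin2sum N (\<lambda>k. 2 * pi * real k / real N - 2 * pi / real N) > 0"
  proof -
    have "sin2sum N (\<lambda>k. 2 * pi * real k / real N - 2 * pi / real N)
        = sin2sum N (\<lambda>k. 2 * pi * real k / real N)"
      by (simp only: sin2sum_eq_weighted weighted_sin2sum_shift)
    moreover have "(real N)^2 > 0" using N by simp
    ultimately show ?thesis using sin2sum_regular_polygon[OF assms(1)] by linarith
  qed
  ultimately show ?thesis
    unfolding admissible_def using assms(2) by auto
qed

lemma S_bound_lower_bound:
  assumes adm: "admissible dmin dmax N R th" and "0 < dmin" and "0 < Ts"
  shows "4 * dmin^2 / (real N * Ts) \<le> S_bound Ts N R th"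
proof -
  define w where "w = (\<lambda>k. 1 / (R k)^2)"
  define W where "W = (\<Sum>k\<in>{1..N}. w k)"
  define D where "D = weighted_sin2sum N w th"
  have range: "dmin \<le> R k" "R k \<le> dmax" if "k \<in> {1..N}" for k
    using adm that unfolding admissible_def by auto
  have sin2: "sin2sum N th > 0"
    using adm unfolding admissible_def by auto
  then have "N \<ge> 1"
    by (cases N) (auto simp: sin2sum_def)
  then have "dmax > 0"
    using range[of 1] \<open>0 < dmin\<close> by auto
  have w_bounds: "1 / dmax^2 \<le> w k" "w k \<le> 1 / dmin^2" if "k \<in> {1..N}" for k
    using range[OF that] \<open>0 < dmin\<close> unfolding w_def
    by (auto intro!: divide_left_mono power_mono)
  have W_le: "W \<le> real N / dmin^2"
    using sum_bounded_above[of "{1..N}" w "1 / dmin^2"] w_bounds unfolding W_def by simp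
  have W_pos: "W > 0"
    unfolding W_def using \<open>N \<ge> 1\<close> w_bounds \<open>dmax > 0\<close>
    by (intro sum_pos) (auto intro: less_le_trans[of 0 "1 / dmax^2"])
  have "(1 / dmax^2)^2 * sin2sum N th \<le> D"
    unfolding D_def using w_bounds by (intro weighted_sin2sum_ge) auto
  moreover have "(1 / dmax^2)^2 * sin2sum N th > 0"
    using sin2 \<open>dmax > 0\<close> by simp
  ultimately have D_pos: "D > 0"
    by linarith
  have D_le: "4 * D \<le> W^2"
    unfolding D_def W_def by (rule weighted_sin2sum_le)
  have "4 * dmin^2 / (real N * Ts) = 4 / (Ts * (real N / dmin^2))"
    using \<open>0 < dmin\<close> by (simp add: field_simps)
  also have "\<dots> \<le> 4 / (Ts * W)"
    using W_le W_pos \<open>0 < Ts\<close> by (intro frac_le mult_left_mono) auto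
  also have "\<dots> = W / (Ts * (W^2 / 4))"
    using W_pos by (simp add: field_simps power2_eq_square)
  also have "\<dots> \<le> W / (Ts * D)"
    using D_le D_pos W_pos \<open>0 < Ts\<close> by (intro frac_le mult_left_mono) auto
  also have "\<dots> = S_bound Ts N R th"
    by (simp add: S_bound_eq_weighted W_def D_def w_def)
  finally show ?thesis .
qed

theorem mainTheorem7:
  fixes dmin dmax Ts :: real and N :: nat
  assumes "0 < dmin" and "dmin < dmax" and "N \<ge> 3" and "Ts > 0"
  shows "(\<forall>R th. admissible dmin dmax N R th \<longrightarrow>
            S_bound Ts N R th \<ge> 4 * dmin^2 / (real N * Ts))
       \<and> S_bound Ts N (\<lambda>k. dmin) (\<lambda>k. 2 * pi * real k / real N) = 4 * dmin^2 / (real N * Ts)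
       \<and> Min_on {S_bound Ts N R th | R th. admissible dmin dmax N R th} (4 * dmin^2 / (real N * Ts))
       \<and> Min_on {GDOP Ts N r th | r th. dmin \<le> r \<and> r \<le> dmax \<and>
                    admissible dmin dmax N (\<lambda>k. r) th} (4 * dmin^2 / (real N * Ts))"
proof -
  define th\<^sub>0 where "th\<^sub>0 = (\<lambda>k. 2 * pi * real k / real N - 2 * pi / real N)"
  have lower: "\<forall>R th. admissible dmin dmax N R th \<longrightarrow> S_bound Ts N R th \<ge> 4 * dmin^2 / (real N * Ts)"
    using S_bound_lower_bound assms(1,4) by blast
  have regular: "S_bound Ts N (\<lambda>k. dmin) (\<lambda>k. 2 * pi * real k / real N) = 4 * dmin^2 / (real N * Ts)"
    using S_bound_regular_polygon assms(1,3) by simp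
  have adm: "admissible dmin dmax N (\<lambda>_. dmin) th\<^sub>0"
    unfolding th\<^sub>0_def using regular_polygon_admissible assms(2,3) by simp
  have at_witness: "S_bound Ts N (\<lambda>_. dmin) th\<^sub>0 = 4 * dmin^2 / (real N * Ts)"
    unfolding th\<^sub>0_def S_bound_shift by (rule regular)
  have GDOP_S: "GDOP Ts N r th = S_bound Ts N (\<lambda>_. r) th" if "dmin \<le> r" for r th
    using GDOP_eq_S_bound_const that assms(1) by simp
  have "GDOP Ts N dmin th\<^sub>0 = 4 * dmin^2 / (real N * Ts)"
    using GDOP_S at_witness by simp
  then have "4 * dmin^2 / (real N * Ts) \<in>
      {GDOP Ts N r th | r th. dmin \<le> r \<and> r \<le> dmax \<and> admissible dmin dmax N (\<lambda>k. r) th}"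
    using adm assms(2) by (metis (mono_tags, lifting) mem_Collect_eq order_less_imp_le order_refl)
  moreover have "4 * dmin^2 / (real N * Ts) \<le> GDOP Ts N r th"
    if "dmin \<le> r" "admissible dmin dmax N (\<lambda>k. r) th" for r th
    using lower GDOP_S that by simp
  moreover have "4 * dmin^2 / (real N * Ts) \<in> {S_bound Ts N R th | R th. admissible dmin dmax N R th}"
    using adm at_witness by (metis (mono_tags, lifting) mem_Collect_eq)
  ultimately show ?thesis
    unfolding Min_on_def using lower regular by blast
qed

end
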